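(* Let $(X_n)_{n\ge0}$ be the Kendall random walk with step distribution $\nu\in\mathcal P_s$, $\nu(\{0\})=0$, and let $t>0$ with $\nu(\{t\})=0$ and $G(t)\ne\frac12$. Then for every $n\ge1$ $$\mathbb P\Big(\max_{0\le i\le n}X_i\le t\Big)=A(t)\,2^{-n}+B(t)\frac{G(t)}{1-G(t)}(1-G(t))^2\,n\,G(t)^{n-1}+\big(B(t)+C(t)\big)\frac{G(t)}{1-G(t)}G(t)^{n-1}(1-G(t)),$$ where $$A(t)=1+\frac{H(t)}{(2G(t)-1)^2}-\frac{G(t)}{2G(t)-1},\quad B(t)=\frac{H(t)}{(2G(t)-1)(1-G(t))},\quad C(t)=\frac{G(t)}{2G(t)-1}-\frac{H(t)}{(2G(t)-1)^2}\frac{G(t)}{1-G(t)}.$$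
   Context: Fix $\alpha>0$. $\mathcal P_s$ is the set of symmetric Borel probability measures on $\mathbb R$. For $x\in\mathbb R$, $\widetilde\delta_x=\frac12(\delta_x+\delta_{-x})$. For a probability measure $\lambda=\mathcal L(X)$ and $c>0$, $T_c\lambda=\mathcal L(cX)$, and $T_0\lambda=\delta_0$. $\widetilde\pi_{2\alpha}$ is the symmetric Pareto probability measure with density $\alpha|y|^{-2\alpha-1}\mathbf 1_{\{|y|\ge1\}}$. The Kendall convolution $\vartriangle_\alpha$ on $\mathcal P_s$ is defined by $\widetilde\delta_x\vartriangle_\alpha\widetilde\delta_y=T_M\big(\varrho^\alpha\widetilde\pi_{2\alpha}+(1-\varrho^\alpha)\widetilde\delta_1\big)$ where $M=\max(|x|,|y|)$, $m=\min(|x|,|y|)$, $\varrho=m/M$ (and $\varrho=0$ if $M=0$), extended by $(\nu_1\vartriangle_\alpha\nu_2)(A)=\int\int(\widetilde\delta_x\vartriangle_\alpha\widetilde\delta_y)(A)\,\nu_1(dx)\nu_2(dy)$. For $x\in\mathbb R$ and $\mu\in\mathcal P_s$ we write $\delta_x\vartriangle_\alpha\mu:=\widetilde\delta_x\vartriangle_\alpha\mu$. $\Psi(t)=(1-|t|^\alpha)_+$. For the measure $\nu$: $F(t)=\nu((-\infty,t])$, $G(t)=\int_{\mathbb R}\Psi(x/t)\,\nu(dx)$ for $t\neq0$, and for $t>0$, $H(t)=2F(t)-1-G(t)=t^{-\alpha}\int_{[-t,t]}|x|^\alpha\nu(dx)$. The Kendall random walk with step distribution $\nu$ is the Markov chain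 $(X_n)_{n\ge0}$ with $X_0=0$ and transition kernel $\mathbb P(X_{k+1}\in A\mid X_k=x)=(\delta_x\vartriangle_\alpha\nu)(A)$. *)

theory Defs
  imports "HOL-Probability.Probability"
begin

definition sym_delta :: "real \<Rightarrow> real measure" where
  "sym_delta x = distr (measure_pmf (bernoulli_pmf (1/2))) borel (\<lambda>b. if b then x else - x)"

definition sym_pareto :: "real \<Rightarrow> real measure" where
  "sym_pareto \<alpha> = density lborel
     (\<lambda>y. ennreal (\<alpha> * \<bar>y\<bar> powr (- 2 * \<alpha> - 1) * indicator {y. 1 \<le> \<bar>y\<bar>} y))"

definition scale_meas :: "real \<Rightarrow> real measure \<Rightarrow> real measure" where
  "scale_meas c L = distr L borel (\<lambda>z. c * z)"

text \<open>Kendall convolution of sym_delta x and sym_delta y.\<close>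
definition kendall_pair :: "real \<Rightarrow> real \<Rightarrow> real \<Rightarrow> real measure" where
  "kendall_pair \<alpha> x y =
     (let M = max \<bar>x\<bar> \<bar>y\<bar>; m = min \<bar>x\<bar> \<bar>y\<bar>; \<rho> = (if M = 0 then 0 else m / M)
      in scale_meas M
           (bind (measure_pmf (bernoulli_pmf (\<rho> powr \<alpha>)))
                 (\<lambda>b. if b then sym_pareto \<alpha> else sym_delta 1)))"

definition kendall_kernel :: "real \<Rightarrow> real measure \<Rightarrow> real \<Rightarrow> real measure" where
  "kendall_kernel \<alpha> \<nu> x = bind \<nu> (\<lambda>y. kendall_pair \<alpha> x y)"

text \<open>Joint law of (X_n, max_{0<=i<=n} X_i) for the Kendall random walk started at X_0 = 0.\<close>
fun kendall_walk_max :: "real \<Rightarrow> real measure \<Rightarrow> nat \<Rightarrow> (real \<times> real) measure" where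
  "kendall_walk_max \<alpha> \<nu> 0 = return borel (0, 0)"
| "kendall_walk_max \<alpha> \<nu> (Suc n) =
     bind (kendall_walk_max \<alpha> \<nu> n)
       (\<lambda>(x, m). distr (kendall_kernel \<alpha> \<nu> x) borel (\<lambda>y. (y, max m y)))"

definition Psi :: "real \<Rightarrow> real \<Rightarrow> real" where
  "Psi \<alpha> s = max 0 (1 - \<bar>s\<bar> powr \<alpha>)"

definition cdfF :: "real measure \<Rightarrow> real \<Rightarrow> real" where
  "cdfF \<nu> t = measure \<nu> {..t}"

definition funG :: "real \<Rightarrow> real measure \<Rightarrow> real \<Rightarrow> real" where
  "funG \<alpha> \<nu> t = (\<integral>x. Psi \<alpha> (x / t) \<partial>\<nu>)"

definition funH :: "real \<Rightarrow> real measure \<Rightarrow> real \<Rightarrow> real" where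
  "funH \<alpha> \<nu> t = 2 * cdfF \<nu> t - 1 - funG \<alpha> \<nu> t"

end

theory Submission
  imports Defs
begin

text \<open>
  Let G = \<integral>\<Psi>(x/t) d\<nu> and H = \<nu>[-t,t] - G, which is 2F(t) - 1 - G by the symmetry of \<nu>.
  On the event that max_{i\<le>n} X_i \<le> t, let P_n be its probability and Q_n, R_n the expectations of
  1_{[-t,t]}(X_n) and \<Psi>(X_n/t). One step of the walk gives the linear recursion
  R_{n+1} = G R_n, Q_{n+1} = G Q_n + H R_n, P_{n+1} = (P_n + Q_{n+1})/2, with P_0 = Q_0 = R_0 = 1,
  whose solution is the closed form. The first equation holds because the Kendall convolution is
  multiplicative on \<Psi>: \<integral>\<Psi>(z/t) d(\<delta>_x \<triangle> \<delta>_y) = \<Psi>(x/t) \<Psi>(y/t); the second because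
  \<delta>_x \<triangle> \<delta>_y gives [-t,t] the mass 1_{[-t,t]}(x) 1_{[-t,t]}(y) (1 - (|x|/t)^\<alpha> (|y|/t)^\<alpha>);
  the third because the transition kernel is symmetric. Both identities come down to two integrals
  of the symmetric Pareto law Z: P(|Z| \<le> c) = 1 - c^{-2\<alpha>} and E \<Psi>(Z/c) = (1 - c^{-\<alpha>})^2 for c \<ge> 1.
  Only closed intervals occur.
\<close>

lemma powr_minus_divide_swap:
  fixes a b c :: real
  shows "(a / b) powr (- c) = (b / a) powr c"
  by (simp add: powr_minus inverse_powr[symmetric])

lemma has_real_derivative_minus_powr:
  "x > 0 \<Longrightarrow> ((\<lambda>z. - (z powr (-\<beta>))) has_real_derivative \<beta> * x powr (-\<beta>-1)) (at x)"
  using DERIV_minus[OF has_real_derivative_powr[of x "-\<beta>"]] by simp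

lemma nn_integral_powr_Icc:
  fixes \<beta> c :: real
  assumes "\<beta> > 0" and "1 \<le> c"
  shows "(\<integral>\<^sup>+z. ennreal (\<beta> * z powr (-\<beta>-1)) * indicator {1..c} z \<partial>lborel) = ennreal (1 - c powr (-\<beta>))"
  using nn_integral_FTC_Icc[of "\<lambda>z. \<beta> * z powr (-\<beta>-1)" 1 c "\<lambda>z. - (z powr (-\<beta>))"] assms
  by (simp add: has_real_derivative_minus_powr)

lemma nn_integral_powr_atLeast:
  fixes \<beta> :: real
  assumes "\<beta> > 0"
  shows "(\<integral>\<^sup>+z. ennreal (\<beta> * z powr (-\<beta>-1)) * indicator {1..} z \<partial>lborel) = 1"
proof -
  have "((\<lambda>z::real. z powr (-\<beta>)) \<longlongrightarrow> 0) at_top"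
    using assms by (intro tendsto_neg_powr filterlim_ident) auto
  then have "((\<lambda>z::real. - (z powr (-\<beta>))) \<longlongrightarrow> 0) at_top"
    using tendsto_minus by fastforce
  then show ?thesis
    using nn_integral_FTC_atLeast[of "\<lambda>z. \<beta> * z powr (-\<beta>-1)" 1 "\<lambda>z. - (z powr (-\<beta>))" 0] assms
    by (simp add: has_real_derivative_minus_powr)
qed

lemma integral_bind_nonneg_bounded:
  fixes f :: "'b \<Rightarrow> real"
  assumes N: "N \<in> measurable M (subprob_algebra B)" and M: "space M \<noteq> {}"
    and f[measurable]: "f \<in> borel_measurable B"
    and f_nonneg: "\<And>y. 0 \<le> f y" and f_le: "\<And>y. f y \<le> c"
  shows "(\<integral>x. f x \<partial>(M \<bind> N)) = (\<integral>x. (\<integral>y. f y \<partial>N x) \<partial>M)"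
proof -
  have inner: "(\<integral>\<^sup>+y. ennreal (f y) \<partial>N x) = ennreal (\<integral>y. f y \<partial>N x)" if "x \<in> space M" for x
  proof -
    interpret subprob_space "N x" using subprob_space_kernel[OF N that] .
    have [measurable]: "f \<in> borel_measurable (N x)"
      by (subst measurable_cong_sets[OF sets_kernel[OF N that] refl]) (rule f)
    show ?thesis
      by (intro nn_integral_eq_integral integrable_const_bound[where B=c]) (auto simp: f_nonneg f_le)
  qed
  have [measurable]: "f \<in> borel_measurable (M \<bind> N)"
  proof -
    have "sets (M \<bind> N) = sets B" using M by (simp add: sets_kernel[OF N])
    then show ?thesis by (subst measurable_cong_sets[OF _ refl]) (auto intro: f)
  qed
  have "(\<integral>x. f x \<partial>(M \<bind> N)) = enn2real (\<integral>\<^sup>+x. ennreal (f x) \<partial>(M \<bind> N))"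
    by (rule integral_eq_nn_integral) (auto simp: f_nonneg)
  also have "\<dots> = enn2real (\<integral>\<^sup>+x. ennreal (\<integral>y. f y \<partial>N x) \<partial>M)"
    by (subst nn_integral_bind[OF _ N]) (auto intro!: arg_cong[where f=enn2real] nn_integral_cong inner)
  also have "\<dots> = (\<integral>x. (\<integral>y. f y \<partial>N x) \<partial>M)"
    by (rule integral_eq_nn_integral[symmetric])
       (auto intro!: measurable_compose[OF N integral_measurable_subprob_algebra] integral_nonneg_AE
             simp: f_nonneg)
  finally show ?thesis .
qed

lemma measure_atMost_symmetric:
  fixes M :: "real measure"
  assumes "prob_space M" and sets_M: "sets M = sets borel"
    and symmetric: "distr M borel uminus = M" and "0 \<le> t"
  shows "measure M {..t} = (1 + measure M {-t..t}) / 2"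
proof -
  interpret prob_space M by fact
  have space_M: "space M = UNIV" using sets_eq_imp_space_eq[OF sets_M] by simp
  have [simp]: "A \<in> sets borel \<Longrightarrow> A \<in> events" for A using sets_M by simp
  have "measure M {t<..} = measure (distr M borel uminus) {t<..}" using symmetric by simp
  also have "\<dots> = measure M {..<-t}"
    by (subst measure_distr) (auto simp: measurable_cong_sets[OF sets_M refl] space_M
                                   intro: arg_cong[where f="measure M"])
  finally have "measure M {t<..} = measure M {..<-t}" .
  moreover have "measure M {t<..} = 1 - measure M {..t}"
    using prob_compl[of "{..t}"] by (simp add: space_M Compl_eq_Diff_UNIV[symmetric] Compl_atMost)
  moreover have "measure M {..t} = measure M {..<-t} + measure M {-t..t}"
  proof -
    have "{..t} = {..<-t} \<union> {-t..t}" using \<open>0 \<le> t\<close> by auto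
    then show ?thesis by (auto intro: finite_measure_Union)
  qed
  ultimately show ?thesis by simp
qed

section \<open>The weight function \<Psi> and the symmetric Pareto law\<close>

lemma measurable_Psi [measurable]: "Psi \<alpha> \<in> borel_measurable borel"
  unfolding Psi_def by measurable

lemma Psi_nonneg: "0 \<le> Psi \<alpha> s"
  by (simp add: Psi_def)

lemma Psi_le_1: "Psi \<alpha> s \<le> 1"
  by (simp add: Psi_def)

lemma Psi_eq_indicator:
  assumes "\<alpha> > 0" and "c > 0"
  shows "Psi \<alpha> (z / c) = indicator {-c..c} z * (1 - (\<bar>z\<bar> / c) powr \<alpha>)"
proof (cases "\<bar>z\<bar> \<le> c")
  case True
  then have "(\<bar>z\<bar> / c) powr \<alpha> \<le> 1" using assms by (intro powr_le1) auto
  moreover have "indicator {-c..c} z = (1::real)" using True by (simp add: abs_le_iff)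
  ultimately show ?thesis using assms by (simp add: Psi_def abs_divide)
next
  case False
  then have "1 < (\<bar>z\<bar> / c) powr \<alpha>" using assms by (intro gr_one_powr) auto
  moreover have "indicator {-c..c} z = (0::real)" using False by (auto simp: abs_le_iff)
  ultimately show ?thesis using assms by (simp add: Psi_def abs_divide)
qed

lemma sets_sym_pareto [simp, measurable_cong]: "sets (sym_pareto \<alpha>) = sets borel"
  by (simp add: sym_pareto_def)

lemma nn_integral_sym_pareto:
  assumes g[measurable]: "g \<in> borel_measurable borel"
  shows "(\<integral>\<^sup>+z. g z \<partial>sym_pareto \<alpha>) =
    (\<integral>\<^sup>+z. ennreal (\<alpha> * z powr (-2*\<alpha>-1)) * (g z + g (-z)) * indicator {1..} z \<partial>lborel)"
proof -
  define D where "D z = ennreal (\<alpha> * z powr (-2*\<alpha>-1)) * indicator {1..} z" for z :: real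
  have [measurable]: "D \<in> borel_measurable borel" unfolding D_def by measurable
  have "(\<integral>\<^sup>+z. g z \<partial>sym_pareto \<alpha>) =
     (\<integral>\<^sup>+z. ennreal (\<alpha> * \<bar>z\<bar> powr (- 2 * \<alpha> - 1) * indicator {y. 1 \<le> \<bar>y\<bar>} z) * g z \<partial>lborel)"
    unfolding sym_pareto_def by (subst nn_integral_density) auto
  also have "\<dots> = (\<integral>\<^sup>+z. D z * g z + D (-z) * g z \<partial>lborel)"
    by (intro nn_integral_cong) (auto simp: D_def indicator_def)
  also have "\<dots> = (\<integral>\<^sup>+z. D z * g z \<partial>lborel) + (\<integral>\<^sup>+z. D (-z) * g z \<partial>lborel)"
    by (intro nn_integral_add) auto
  also have "(\<integral>\<^sup>+z. D (-z) * g z \<partial>lborel) = (\<integral>\<^sup>+z. D z * g (-z) \<partial>lborel)"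
    using nn_integral_real_affine[of "\<lambda>z. D (-z) * g z" "-1" 0] by simp
  also have "(\<integral>\<^sup>+z. D z * g z \<partial>lborel) + (\<integral>\<^sup>+z. D z * g (-z) \<partial>lborel)
      = (\<integral>\<^sup>+z. D z * g z + D z * g (-z) \<partial>lborel)"
    by (intro nn_integral_add[symmetric]) auto
  also have "\<dots> = (\<integral>\<^sup>+z. ennreal (\<alpha> * z powr (-2*\<alpha>-1)) * (g z + g (-z)) * indicator {1..} z \<partial>lborel)"
    by (intro nn_integral_cong) (simp add: D_def algebra_simps)
  finally show ?thesis .
qed

lemma nn_integral_sym_pareto_even:
  assumes "\<alpha> > 0" and "g \<in> borel_measurable borel" and even: "\<And>z. g (-z) = g z"
  shows "(\<integral>\<^sup>+z. g z \<partial>sym_pareto \<alpha>) =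
    (\<integral>\<^sup>+z. ennreal (2*\<alpha> * z powr (-(2*\<alpha>)-1)) * g z * indicator {1..} z \<partial>lborel)"
proof -
  have "ennreal (\<alpha> * z powr (-2*\<alpha>-1)) * (g z + g z) = ennreal (2*\<alpha> * z powr (-(2*\<alpha>)-1)) * g z" for z
    using \<open>\<alpha> > 0\<close> by (simp add: ennreal_mult' mult_2 [symmetric] distrib_left mult_ac)
  then show ?thesis by (simp add: nn_integral_sym_pareto assms)
qed

lemma prob_space_sym_pareto: "\<alpha> > 0 \<Longrightarrow> prob_space (sym_pareto \<alpha>)"
proof (rule prob_spaceI)
  assume "\<alpha> > 0"
  have "emeasure (sym_pareto \<alpha>) (space (sym_pareto \<alpha>)) = (\<integral>\<^sup>+z. 1 \<partial>sym_pareto \<alpha>)"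
    by simp
  also have "\<dots> = (\<integral>\<^sup>+z. ennreal (2*\<alpha> * z powr (-(2*\<alpha>)-1)) * 1 * indicator {1..} z \<partial>lborel)"
    using \<open>\<alpha> > 0\<close> by (intro nn_integral_sym_pareto_even) auto
  also have "\<dots> = 1"
    using \<open>\<alpha> > 0\<close> nn_integral_powr_atLeast[of "2*\<alpha>"] by simp
  finally show "emeasure (sym_pareto \<alpha>) (space (sym_pareto \<alpha>)) = 1" .
qed

lemma measure_sym_pareto_Icc:
  assumes "\<alpha> > 0"
  shows "measure (sym_pareto \<alpha>) {-c..c} = (if 1 \<le> c then 1 - c powr (-2*\<alpha>) else 0)"
proof -
  have "emeasure (sym_pareto \<alpha>) {-c..c}
      = (\<integral>\<^sup>+z. ennreal (2*\<alpha> * z powr (-(2*\<alpha>)-1)) * indicator {1..c} z \<partial>lborel)"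
  proof -
    have "emeasure (sym_pareto \<alpha>) {-c..c} = (\<integral>\<^sup>+z. indicator {-c..c} z \<partial>sym_pareto \<alpha>)"
      by simp
    also have "\<dots> = (\<integral>\<^sup>+z. ennreal (2*\<alpha> * z powr (-(2*\<alpha>)-1)) * indicator {-c..c} z * indicator {1..} z \<partial>lborel)"
      using assms by (intro nn_integral_sym_pareto_even) (auto split: split_indicator)
    finally show ?thesis
      by (simp add: mult.assoc flip: indicator_inter_arith) (auto intro!: nn_integral_cong split: split_indicator)
  qed
  also have "\<dots> = ennreal (if 1 \<le> c then 1 - c powr (-2*\<alpha>) else 0)"
    using assms nn_integral_powr_Icc[of "2*\<alpha>" c] by auto
  finally show ?thesis
    using assms by (simp add: measure_def ge_one_powr_ge_zero powr_minus_divide)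
qed

lemma integral_sym_pareto_truncated_moment:
  assumes "\<alpha> > 0" and "c > 0"
  shows "(\<integral>z. indicator {-c..c} z * (\<bar>z\<bar> / c) powr \<alpha> \<partial>sym_pareto \<alpha>)
       = (if 1 \<le> c then 2 * c powr (-\<alpha>) * (1 - c powr (-\<alpha>)) else 0)"
proof -
  have density: "2*\<alpha> * z powr (-(2*\<alpha>)-1) * (z / c) powr \<alpha> = 2 * c powr (-\<alpha>) * (\<alpha> * z powr (-\<alpha>-1))"
    if "z > 0" for z
    using that \<open>c > 0\<close> by (simp add: powr_divide powr_minus_divide powr_add[symmetric] field_simps)
  have "(\<integral>\<^sup>+z. ennreal (indicator {-c..c} z * (\<bar>z\<bar> / c) powr \<alpha>) \<partial>sym_pareto \<alpha>)
      = (\<integral>\<^sup>+z. ennreal (2*\<alpha> * z powr (-(2*\<alpha>)-1)) * ennreal (indicator {-c..c} z * (\<bar>z\<bar> / c) powr \<alpha>)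
                 * indicator {1..} z \<partial>lborel)"
    using assms by (intro nn_integral_sym_pareto_even) (auto split: split_indicator)
  also have "\<dots> = (\<integral>\<^sup>+z. ennreal (2 * c powr (-\<alpha>)) * (ennreal (\<alpha> * z powr (-\<alpha>-1)) * indicator {1..c} z) \<partial>lborel)"
    using assms density by (intro nn_integral_cong) (auto split: split_indicator simp flip: ennreal_mult')
  also have "\<dots> = ennreal (2 * c powr (-\<alpha>)) * ennreal (if 1 \<le> c then 1 - c powr (-\<alpha>) else 0)"
    using assms nn_integral_powr_Icc[of \<alpha> c] by (subst nn_integral_cmult) auto
  finally show ?thesis
    using assms
    by (subst integral_eq_nn_integral) (auto simp: ge_one_powr_ge_zero powr_minus_divide simp flip: ennreal_mult)
qed

lemma integral_Psi_sym_pareto: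
  assumes "\<alpha> > 0" and "c > 0"
  shows "(\<integral>z. Psi \<alpha> (z / c) \<partial>sym_pareto \<alpha>) = (if 1 \<le> c then (1 - c powr (-\<alpha>))\<^sup>2 else 0)"
proof -
  interpret prob_space "sym_pareto \<alpha>" using prob_space_sym_pareto \<open>\<alpha> > 0\<close> .
  have moment_le_1: "\<bar>indicator {-c..c} z * (\<bar>z\<bar> / c) powr \<alpha>\<bar> \<le> 1" for z
    using assms by (auto split: split_indicator intro: powr_le1)
  have "(\<integral>z. Psi \<alpha> (z / c) \<partial>sym_pareto \<alpha>)
      = (\<integral>z. indicator {-c..c} z - indicator {-c..c} z * (\<bar>z\<bar> / c) powr \<alpha> \<partial>sym_pareto \<alpha>)"
    using assms by (simp add: Psi_eq_indicator right_diff_distrib)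
  also have "\<dots> = measure (sym_pareto \<alpha>) {-c..c} - (\<integral>z. indicator {-c..c} z * (\<bar>z\<bar> / c) powr \<alpha> \<partial>sym_pareto \<alpha>)"
    using moment_le_1 by (subst Bochner_Integration.integral_diff) (auto intro!: integrable_const_bound[where B=1])
  also have "\<dots> = (if 1 \<le> c then (1 - c powr (-\<alpha>))\<^sup>2 else 0)"
    using assms
    by (simp add: measure_sym_pareto_Icc integral_sym_pareto_truncated_moment power2_eq_square
                  algebra_simps powr_add[symmetric])
  finally show ?thesis .
qed

lemma sets_sym_delta [simp, measurable_cong]: "sets (sym_delta x) = sets borel"
  by (simp add: sym_delta_def)

lemma prob_space_sym_delta: "prob_space (sym_delta x)"
  unfolding sym_delta_def by (intro prob_space.prob_space_distr) (auto simp: prob_space_measure_pmf)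

lemma nn_integral_sym_delta:
  "g \<in> borel_measurable borel \<Longrightarrow> (\<integral>\<^sup>+z. g z \<partial>sym_delta x) = ennreal (1/2) * (g x + g (-x))"
  unfolding sym_delta_def by (subst nn_integral_distr) (auto simp: algebra_simps)

section \<open>Kendall convolution of two symmetric point masses\<close>

definition kendall_weight :: "real \<Rightarrow> real \<Rightarrow> real \<Rightarrow> real" where
  "kendall_weight \<alpha> x y = (if max \<bar>x\<bar> \<bar>y\<bar> = 0 then 0 else min \<bar>x\<bar> \<bar>y\<bar> / max \<bar>x\<bar> \<bar>y\<bar>) powr \<alpha>"

lemma kendall_weight_nonneg: "0 \<le> kendall_weight \<alpha> x y"
  by (simp add: kendall_weight_def)

lemma kendall_weight_le_1: "\<alpha> > 0 \<Longrightarrow> kendall_weight \<alpha> x y \<le> 1"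
  unfolding kendall_weight_def by (auto intro!: powr_le1 simp: divide_le_eq_1)

lemma kendall_weight_mult_powr:
  assumes "\<bar>x\<bar> \<le> \<bar>y\<bar>" and "t > 0"
  shows "kendall_weight \<alpha> x y * (\<bar>y\<bar> / t) powr \<alpha> = (\<bar>x\<bar> / t) powr \<alpha>"
  using assms by (auto simp: kendall_weight_def max_def min_def powr_mult[symmetric])

lemma kendall_pair_commute: "kendall_pair \<alpha> x y = kendall_pair \<alpha> y x"
  by (simp add: kendall_pair_def max.commute min.commute)

lemma kendall_pair_eq_distr_mixture:
  "kendall_pair \<alpha> x y =
     distr (measure_pmf (bernoulli_pmf (kendall_weight \<alpha> x y)) \<bind> (\<lambda>b. if b then sym_pareto \<alpha> else sym_delta 1))
       borel (\<lambda>z. max \<bar>x\<bar> \<bar>y\<bar> * z)"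
  unfolding kendall_pair_def kendall_weight_def scale_meas_def Let_def ..

lemma measurable_pareto_or_delta:
  "\<alpha> > 0 \<Longrightarrow> (\<lambda>b. if b then sym_pareto \<alpha> else sym_delta 1) \<in> measurable (measure_pmf p) (subprob_algebra borel)"
  by (auto simp: measurable_pmf_measure1 space_subprob_algebra prob_space_imp_subprob_space
                 prob_space_sym_pareto prob_space_sym_delta)

lemma sets_kendall_pair [simp, measurable_cong]: "sets (kendall_pair \<alpha> x y) = sets borel"
  by (simp add: kendall_pair_eq_distr_mixture)

lemma prob_space_kendall_pair: "\<alpha> > 0 \<Longrightarrow> prob_space (kendall_pair \<alpha> x y)"
  unfolding kendall_pair_eq_distr_mixture
  by (intro prob_space.prob_space_distr prob_space.prob_space_bind[OF prob_space_measure_pmf _ measurable_pareto_or_delta])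
     (auto simp: prob_space_sym_pareto prob_space_sym_delta)

lemma nn_integral_kendall_pair:
  assumes "\<alpha> > 0" and g[measurable]: "g \<in> borel_measurable borel"
  shows "(\<integral>\<^sup>+z. g z \<partial>kendall_pair \<alpha> x y) =
     ennreal (kendall_weight \<alpha> x y) * (\<integral>\<^sup>+z. g (max \<bar>x\<bar> \<bar>y\<bar> * z) \<partial>sym_pareto \<alpha>)
     + ennreal (1 - kendall_weight \<alpha> x y) * ennreal (1/2) * (g (max \<bar>x\<bar> \<bar>y\<bar>) + g (- max \<bar>x\<bar> \<bar>y\<bar>))"
  unfolding kendall_pair_eq_distr_mixture
  using assms kendall_weight_nonneg[of \<alpha> x y] kendall_weight_le_1[of \<alpha> x y]
  by (simp add: nn_integral_distr nn_integral_bind[OF _ measurable_pareto_or_delta] nn_integral_sym_delta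
                mult_ac)

lemma measurable_kendall_pair:
  assumes "\<alpha> > 0"
  shows "(\<lambda>(x, y). kendall_pair \<alpha> x y) \<in> measurable (borel \<Otimes>\<^sub>M borel) (subprob_algebra borel)"
proof (rule measurable_subprob_algebra)
  fix A :: "real set" assume [measurable]: "A \<in> sets borel"
  have [measurable]: "(\<lambda>w. kendall_weight \<alpha> (fst w) (snd w)) \<in> borel_measurable (borel \<Otimes>\<^sub>M borel)"
    unfolding kendall_weight_def by measurable
  have "sym_pareto \<alpha> \<in> space (subprob_algebra borel)"
    using prob_space_sym_pareto[OF assms] by (simp add: space_subprob_algebra prob_space_imp_subprob_space)
  then have [measurable]: "(\<lambda>w. \<integral>\<^sup>+z. indicator A (max \<bar>fst w\<bar> \<bar>snd w\<bar> * z) \<partial>sym_pareto \<alpha>)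
      \<in> borel_measurable (borel \<Otimes>\<^sub>M borel)"
    by (intro nn_integral_measurable_subprob_algebra2[where N=borel]) (auto intro: measurable_const)
  show "(\<lambda>w. emeasure (case w of (x, y) \<Rightarrow> kendall_pair \<alpha> x y) A) \<in> borel_measurable (borel \<Otimes>\<^sub>M borel)"
    using nn_integral_kendall_pair[OF assms borel_measurable_indicator]
    by (simp add: split_beta' nn_integral_indicator[symmetric] del: nn_integral_indicator) measurable
qed (auto simp: prob_space_kendall_pair[OF assms] prob_space_imp_subprob_space)

lemma distr_kendall_pair_uminus:
  assumes "\<alpha> > 0"
  shows "distr (kendall_pair \<alpha> x y) borel uminus = kendall_pair \<alpha> x y"
proof (rule measure_eqI)
  fix A :: "real set" assume "A \<in> sets (distr (kendall_pair \<alpha> x y) borel uminus)"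
  then have [measurable]: "A \<in> sets borel" by simp
  define M where "M = max \<bar>x\<bar> \<bar>y\<bar>"
  have pareto_reflect: "(\<integral>\<^sup>+z. indicator A (- (M * z)) \<partial>sym_pareto \<alpha>) = (\<integral>\<^sup>+z. indicator A (M * z) \<partial>sym_pareto \<alpha>)"
    by (simp add: nn_integral_sym_pareto add.commute)
  have "emeasure (distr (kendall_pair \<alpha> x y) borel uminus) A = (\<integral>\<^sup>+z. indicator A (- z) \<partial>kendall_pair \<alpha> x y)"
    by (simp add: nn_integral_indicator[symmetric] nn_integral_distr del: nn_integral_indicator)
  also have "\<dots> = (\<integral>\<^sup>+z. indicator A z \<partial>kendall_pair \<alpha> x y)"
    using assms by (simp add: nn_integral_kendall_pair pareto_reflect add.commute flip: M_def
                         del: nn_integral_indicator)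
  finally show "emeasure (distr (kendall_pair \<alpha> x y) borel uminus) A = emeasure (kendall_pair \<alpha> x y) A"
    by simp
qed simp

lemma integral_kendall_pair_even:
  fixes g :: "real \<Rightarrow> real"
  assumes "\<alpha> > 0" and g[measurable]: "g \<in> borel_measurable borel"
    and even: "\<And>z. g (-z) = g z" and g_nonneg: "\<And>z. 0 \<le> g z" and g_le: "\<And>z. g z \<le> c"
  shows "(\<integral>z. g z \<partial>kendall_pair \<alpha> x y)
       = kendall_weight \<alpha> x y * (\<integral>z. g (max \<bar>x\<bar> \<bar>y\<bar> * z) \<partial>sym_pareto \<alpha>)
         + (1 - kendall_weight \<alpha> x y) * g (max \<bar>x\<bar> \<bar>y\<bar>)"
proof -
  define p M where "p = kendall_weight \<alpha> x y" and "M = max \<bar>x\<bar> \<bar>y\<bar>"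
  define I where "I = (\<integral>z. g (M * z) \<partial>sym_pareto \<alpha>)"
  interpret pareto: prob_space "sym_pareto \<alpha>" using prob_space_sym_pareto \<open>\<alpha> > 0\<close> .
  have p: "0 \<le> p" "p \<le> 1" using kendall_weight_nonneg kendall_weight_le_1 \<open>\<alpha> > 0\<close> by (auto simp: p_def)
  have "I \<ge> 0" unfolding I_def by (simp add: g_nonneg)
  have pareto_part: "(\<integral>\<^sup>+z. ennreal (g (M * z)) \<partial>sym_pareto \<alpha>) = ennreal I"
    unfolding I_def using g_nonneg g_le
    by (intro nn_integral_eq_integral pareto.integrable_const_bound[where B=c]) auto
  have "(\<integral>z. g z \<partial>kendall_pair \<alpha> x y) = enn2real (\<integral>\<^sup>+z. ennreal (g z) \<partial>kendall_pair \<alpha> x y)"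
    by (rule integral_eq_nn_integral) (auto simp: g_nonneg)
  also have "\<dots> = enn2real (ennreal p * ennreal I + ennreal (1 - p) * ennreal (1/2) * (ennreal (g M) + ennreal (g M)))"
    using \<open>\<alpha> > 0\<close> by (simp add: nn_integral_kendall_pair pareto_part even del: ennreal_half flip: p_def M_def)
  also have "\<dots> = p * I + (1 - p) * g M"
    using p \<open>I \<ge> 0\<close> g_nonneg[of M] by (simp del: ennreal_half flip: ennreal_plus ennreal_mult)
  finally show ?thesis by (simp add: p_def M_def I_def)
qed

lemma measure_kendall_pair_Icc_le:
  assumes "\<alpha> > 0" and "t > 0" and "\<bar>x\<bar> \<le> \<bar>y\<bar>"
  shows "measure (kendall_pair \<alpha> x y) {-t..t}
       = indicator {-t..t} x * indicator {-t..t} y * (1 - (\<bar>x\<bar> / t) powr \<alpha> * (\<bar>y\<bar> / t) powr \<alpha>)"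
proof -
  define p where "p = kendall_weight \<alpha> x y"
  have "measure (kendall_pair \<alpha> x y) {-t..t} = (\<integral>z. indicator {-t..t} z \<partial>kendall_pair \<alpha> x y)"
    by simp
  also have "\<dots> = p * (\<integral>z. indicator {-t..t} (\<bar>y\<bar> * z) \<partial>sym_pareto \<alpha>) + (1 - p) * indicator {-t..t} \<bar>y\<bar>"
    using assms by (subst integral_kendall_pair_even[where c=1]) (auto simp: p_def max_def split: split_indicator)
  also have "\<dots> = indicator {-t..t} x * indicator {-t..t} y * (1 - (\<bar>x\<bar> / t) powr \<alpha> * (\<bar>y\<bar> / t) powr \<alpha>)"
  proof (cases "y = 0")
    case True
    then show ?thesis
      using assms prob_space.prob_space[OF prob_space_sym_pareto[OF \<open>\<alpha> > 0\<close>]]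
      by (simp add: p_def kendall_weight_def)
  next
    case False
    then have "\<bar>y\<bar> * z \<in> {-t..t} \<longleftrightarrow> z \<in> {-(t/\<bar>y\<bar>)..t/\<bar>y\<bar>}" for z
      by (simp add: field_simps)
    then have "indicator {-t..t} (\<bar>y\<bar> * z) = (indicator {-(t/\<bar>y\<bar>)..t/\<bar>y\<bar>} z :: real)" for z
      by (simp add: indicator_def)
    then have "(\<integral>z. indicator {-t..t} (\<bar>y\<bar> * z) \<partial>sym_pareto \<alpha>) = measure (sym_pareto \<alpha>) {-(t/\<bar>y\<bar>)..t/\<bar>y\<bar>}"
      by simp
    also have "\<dots> = (if \<bar>y\<bar> \<le> t then 1 - (\<bar>y\<bar> / t) powr \<alpha> * (\<bar>y\<bar> / t) powr \<alpha> else 0)"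
      using assms False
      by (simp add: measure_sym_pareto_Icc powr_minus_divide_swap powr_add[symmetric] le_divide_eq_1)
    finally show ?thesis
      using assms kendall_weight_mult_powr[OF assms(3,2), of \<alpha>]
      by (auto simp: p_def algebra_simps abs_le_iff split: split_indicator)
  qed
  finally show ?thesis .
qed

lemma measure_kendall_pair_Icc:
  assumes "\<alpha> > 0" and "t > 0"
  shows "measure (kendall_pair \<alpha> x y) {-t..t}
       = indicator {-t..t} x * indicator {-t..t} y * (1 - (\<bar>x\<bar> / t) powr \<alpha> * (\<bar>y\<bar> / t) powr \<alpha>)"
proof (cases "\<bar>x\<bar> \<le> \<bar>y\<bar>")
  case False
  then show ?thesis
    using measure_kendall_pair_Icc_le[OF assms, of y x] by (simp add: kendall_pair_commute mult_ac)
qed (rule measure_kendall_pair_Icc_le[OF assms])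

lemma integral_Psi_kendall_pair_le:
  assumes "\<alpha> > 0" and "t > 0" and "\<bar>x\<bar> \<le> \<bar>y\<bar>"
  shows "(\<integral>z. Psi \<alpha> (z / t) \<partial>kendall_pair \<alpha> x y) = Psi \<alpha> (x / t) * Psi \<alpha> (y / t)"
proof -
  define p where "p = kendall_weight \<alpha> x y"
  have "(\<integral>z. Psi \<alpha> (z / t) \<partial>kendall_pair \<alpha> x y)
      = p * (\<integral>z. Psi \<alpha> (\<bar>y\<bar> * z / t) \<partial>sym_pareto \<alpha>) + (1 - p) * Psi \<alpha> (\<bar>y\<bar> / t)"
    using assms
    by (subst integral_kendall_pair_even[where c=1])
       (auto simp: p_def max_def Psi_nonneg Psi_le_1 Psi_def abs_divide)
  also have "\<dots> = Psi \<alpha> (x / t) * Psi \<alpha> (y / t)"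
  proof (cases "y = 0")
    case True
    then show ?thesis
      using assms prob_space.prob_space[OF prob_space_sym_pareto[OF \<open>\<alpha> > 0\<close>]]
      by (simp add: p_def kendall_weight_def Psi_def)
  next
    case False
    then have "(\<lambda>z. Psi \<alpha> (\<bar>y\<bar> * z / t)) = (\<lambda>z. Psi \<alpha> (z / (t / \<bar>y\<bar>)))"
      by (simp add: mult.commute)
    then have "(\<integral>z. Psi \<alpha> (\<bar>y\<bar> * z / t) \<partial>sym_pareto \<alpha>) = (\<integral>z. Psi \<alpha> (z / (t / \<bar>y\<bar>)) \<partial>sym_pareto \<alpha>)"
      by (simp only:)
    also have "\<dots> = (if \<bar>y\<bar> \<le> t then (1 - (\<bar>y\<bar> / t) powr \<alpha>)\<^sup>2 else 0)"
      using assms False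
      by (subst integral_Psi_sym_pareto) (auto simp: powr_minus_divide_swap le_divide_eq_1)
    finally show ?thesis
      using assms kendall_weight_mult_powr[OF assms(3,2), of \<alpha>]
      by (auto simp: p_def Psi_eq_indicator power2_eq_square algebra_simps abs_le_iff split: split_indicator)
  qed
  finally show ?thesis .
qed

lemma integral_Psi_kendall_pair:
  assumes "\<alpha> > 0" and "t > 0"
  shows "(\<integral>z. Psi \<alpha> (z / t) \<partial>kendall_pair \<alpha> x y) = Psi \<alpha> (x / t) * Psi \<alpha> (y / t)"
proof (cases "\<bar>x\<bar> \<le> \<bar>y\<bar>")
  case False
  then show ?thesis
    using integral_Psi_kendall_pair_le[OF assms, of y x] by (simp add: kendall_pair_commute mult_ac)
qed (rule integral_Psi_kendall_pair_le[OF assms])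

section \<open>The transition kernel\<close>

locale kendall_random_walk =
  fixes \<alpha> :: real and \<nu> :: "real measure"
  assumes alpha_pos: "\<alpha> > 0"
    and prob_space_step: "prob_space \<nu>"
    and sets_step [measurable_cong]: "sets \<nu> = sets borel"
begin

lemma integrable_step:
  fixes f :: "real \<Rightarrow> real"
  shows "f \<in> borel_measurable borel \<Longrightarrow> (\<And>y. \<bar>f y\<bar> \<le> c) \<Longrightarrow> integrable \<nu> f"
  using prob_space.finite_measure[OF prob_space_step]
  by (intro finite_measure.integrable_const_bound[where B=c]) auto

lemma measurable_kendall_pair_right: "kendall_pair \<alpha> x \<in> measurable \<nu> (subprob_algebra borel)"
proof -
  have "(\<lambda>y. (x, y)) \<in> measurable borel (borel \<Otimes>\<^sub>M borel)" by simp
  from measurable_compose[OF this measurable_kendall_pair[OF alpha_pos]]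
  show ?thesis by (simp add: measurable_cong_sets[OF sets_step refl])
qed

lemma measurable_kendall_kernel: "kendall_kernel \<alpha> \<nu> \<in> measurable borel (subprob_algebra borel)"
  unfolding kendall_kernel_def
proof (rule measurable_bind'[where N=borel])
  have "\<nu> \<in> space (subprob_algebra borel)"
    using prob_space_step sets_step by (simp add: space_subprob_algebra prob_space_imp_subprob_space)
  then show "(\<lambda>x. \<nu>) \<in> measurable borel (subprob_algebra borel)"
    by simp
  show "(\<lambda>(x, y). kendall_pair \<alpha> x y) \<in> measurable (borel \<Otimes>\<^sub>M borel) (subprob_algebra borel)"
    by (rule measurable_kendall_pair[OF alpha_pos])
qed

lemma prob_space_kendall_kernel: "prob_space (kendall_kernel \<alpha> \<nu> x)"
  unfolding kendall_kernel_def
  by (rule prob_space.prob_space_bind[OF prob_space_step _ measurable_kendall_pair_right])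
     (simp add: prob_space_kendall_pair[OF alpha_pos])

lemma sets_kendall_kernel [simp, measurable_cong]: "sets (kendall_kernel \<alpha> \<nu> x) = sets borel"
  using measurable_space[OF measurable_kendall_kernel, of x] by (simp add: space_subprob_algebra)

lemma distr_kendall_kernel_uminus: "distr (kendall_kernel \<alpha> \<nu> x) borel uminus = kendall_kernel \<alpha> \<nu> x"
  unfolding kendall_kernel_def
  using prob_space.not_empty[OF prob_space_step]
  by (simp add: distr_bind[OF measurable_kendall_pair_right] distr_kendall_pair_uminus[OF alpha_pos])

lemma integral_kendall_kernel:
  fixes f :: "real \<Rightarrow> real"
  assumes "f \<in> borel_measurable borel" and "\<And>z. 0 \<le> f z" and "\<And>z. f z \<le> c"
  shows "(\<integral>z. f z \<partial>kendall_kernel \<alpha> \<nu> x) = (\<integral>y. (\<integral>z. f z \<partial>kendall_pair \<alpha> x y) \<partial>\<nu>)"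
  unfolding kendall_kernel_def
  using prob_space.not_empty[OF prob_space_step] assms
  by (intro integral_bind_nonneg_bounded[OF measurable_kendall_pair_right]) auto

lemma measure_kendall_kernel_Icc:
  assumes "t > 0"
  shows "measure (kendall_kernel \<alpha> \<nu> x) {-t..t}
       = funG \<alpha> \<nu> t * indicator {-t..t} x + (measure \<nu> {-t..t} - funG \<alpha> \<nu> t) * Psi \<alpha> (x / t)"
proof -
  have integrable: "integrable \<nu> (indicator {-t..t} :: real \<Rightarrow> real)" "integrable \<nu> (\<lambda>y. Psi \<alpha> (y / t))"
    by (auto intro!: integrable_step[where c=1] simp: Psi_nonneg Psi_le_1 split: split_indicator)
  have "measure (kendall_kernel \<alpha> \<nu> x) {-t..t} = (\<integral>z. indicator {-t..t} z \<partial>kendall_kernel \<alpha> \<nu> x)"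
    by simp
  also have "\<dots> = (\<integral>y. measure (kendall_pair \<alpha> x y) {-t..t} \<partial>\<nu>)"
    by (subst integral_kendall_kernel[where c=1]) auto
  also have "\<dots> = (\<integral>y. indicator {-t..t} x * Psi \<alpha> (y / t) + Psi \<alpha> (x / t) * indicator {-t..t} y
                        - Psi \<alpha> (x / t) * Psi \<alpha> (y / t) \<partial>\<nu>)"
    using assms alpha_pos
    by (intro Bochner_Integration.integral_cong)
       (auto simp: measure_kendall_pair_Icc Psi_eq_indicator algebra_simps split: split_indicator)
  also have "\<dots> = funG \<alpha> \<nu> t * indicator {-t..t} x + (measure \<nu> {-t..t} - funG \<alpha> \<nu> t) * Psi \<alpha> (x / t)"
    using integrable by (simp add: funG_def algebra_simps)
  finally show ?thesis .
qed

lemma measure_kendall_kernel_atMost: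
  "0 \<le> t \<Longrightarrow> measure (kendall_kernel \<alpha> \<nu> x) {..t} = (1 + measure (kendall_kernel \<alpha> \<nu> x) {-t..t}) / 2"
  by (rule measure_atMost_symmetric[OF prob_space_kendall_kernel sets_kendall_kernel distr_kendall_kernel_uminus])

lemma integral_Psi_kendall_kernel:
  assumes "t > 0"
  shows "(\<integral>z. Psi \<alpha> (z / t) \<partial>kendall_kernel \<alpha> \<nu> x) = funG \<alpha> \<nu> t * Psi \<alpha> (x / t)"
  using assms alpha_pos
  by (simp add: integral_kendall_kernel[where c=1] Psi_nonneg Psi_le_1 integral_Psi_kendall_pair funG_def)

lemma funG_less_1:
  assumes "t > 0" and "measure \<nu> {0} = 0"
  shows "funG \<alpha> \<nu> t < 1"
proof -
  interpret step: prob_space \<nu> by (rule prob_space_step)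
  have integrable: "integrable \<nu> (\<lambda>x. 1 - Psi \<alpha> (x / t))"
    by (rule integrable_step[where c=1]) (auto simp: Psi_nonneg Psi_le_1)
  have "1 - funG \<alpha> \<nu> t = (\<integral>x. 1 - Psi \<alpha> (x / t) \<partial>\<nu>)"
    using integrable_step[of "\<lambda>x. Psi \<alpha> (x / t)" 1]
    by (simp add: funG_def Psi_nonneg Psi_le_1 step.prob_space)
  moreover have "(\<integral>x. 1 - Psi \<alpha> (x / t) \<partial>\<nu>) \<noteq> 0"
  proof
    assume "(\<integral>x. 1 - Psi \<alpha> (x / t) \<partial>\<nu>) = 0"
    then have "AE x in \<nu>. 1 - Psi \<alpha> (x / t) = 0"
      using integrable by (subst integral_nonneg_eq_0_iff_AE[symmetric]) (auto simp: Psi_le_1)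
    moreover have "1 - Psi \<alpha> (x / t) \<noteq> 0" if "x \<noteq> 0" for x
    proof -
      have "0 < (\<bar>x\<bar> / t) powr \<alpha>" using that assms by simp
      then show ?thesis using assms by (simp add: Psi_def abs_divide max_def)
    qed
    ultimately have "AE x in \<nu>. x = 0"
      by (auto elim: AE_mp)
    then have "measure \<nu> {x \<in> space \<nu>. x = 0} = 1"
      by (intro step.prob_Collect_eq_1[THEN iffD2]) (auto simp: sets_eq_imp_space_eq[OF sets_step])
    with assms show False
      by (simp add: sets_eq_imp_space_eq[OF sets_step])
  qed
  moreover have "0 \<le> (\<integral>x. 1 - Psi \<alpha> (x / t) \<partial>\<nu>)"
    by (intro integral_nonneg_AE) (simp add: Psi_le_1)
  ultimately show ?thesis by linarith
qed

section \<open>The walk below a level\<close>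

lemma measurable_kendall_walk_step:
  "(\<lambda>(x, m). distr (kendall_kernel \<alpha> \<nu> x) borel (\<lambda>y. (y, max m y)))
     \<in> measurable (borel :: (real \<times> real) measure) (subprob_algebra borel)"
proof -
  have "(\<lambda>w. distr (kendall_kernel \<alpha> \<nu> (fst w)) (borel \<Otimes>\<^sub>M borel) (\<lambda>y. (y, max (snd w) y)))
      \<in> measurable (borel \<Otimes>\<^sub>M borel) (subprob_algebra (borel \<Otimes>\<^sub>M borel))"
  proof (rule measurable_distr2[where M=borel])
    show "(\<lambda>(w, y). (y, max (snd w) (y::real))) \<in> measurable ((borel \<Otimes>\<^sub>M borel) \<Otimes>\<^sub>M borel) (borel \<Otimes>\<^sub>M borel)"
      by measurable
    show "(\<lambda>w. kendall_kernel \<alpha> \<nu> (fst w)) \<in> measurable (borel \<Otimes>\<^sub>M (borel :: real measure)) (subprob_algebra borel)"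
      by (rule measurable_compose[OF measurable_fst measurable_kendall_kernel])
  qed
  then show ?thesis unfolding borel_prod split_beta' .
qed

lemma prob_space_kendall_walk_max:
  "prob_space (kendall_walk_max \<alpha> \<nu> n) \<and> sets (kendall_walk_max \<alpha> \<nu> n) = sets borel"
proof (induction n)
  case (Suc n)
  then have prob: "prob_space (kendall_walk_max \<alpha> \<nu> n)"
    and sets: "sets (kendall_walk_max \<alpha> \<nu> n) = sets borel" by auto
  have step: "(\<lambda>(x, m). distr (kendall_kernel \<alpha> \<nu> x) borel (\<lambda>y. (y, max m y)))
      \<in> measurable (kendall_walk_max \<alpha> \<nu> n) (subprob_algebra borel)"
    by (subst measurable_cong_sets[OF sets refl]) (rule measurable_kendall_walk_step)
  have "prob_space (kendall_walk_max \<alpha> \<nu> (Suc n))"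
    unfolding kendall_walk_max.simps
    by (rule prob_space.prob_space_bind[OF prob _ step])
       (auto simp: split_beta' intro!: prob_space.prob_space_distr prob_space_kendall_kernel)
  moreover have "sets (kendall_walk_max \<alpha> \<nu> (Suc n)) = sets borel"
    unfolding kendall_walk_max.simps
    using sets_bind[OF sets_kernel[OF step] prob_space.not_empty[OF prob]] .
  ultimately show ?case ..
qed (simp add: prob_space_return)

lemma sets_kendall_walk_max [measurable_cong]: "sets (kendall_walk_max \<alpha> \<nu> n) = sets borel"
  using prob_space_kendall_walk_max by blast

definition max_le_expectation :: "real \<Rightarrow> nat \<Rightarrow> (real \<Rightarrow> real) \<Rightarrow> real" where
  "max_le_expectation t n f = (\<integral>p. indicator {..t} (snd p) * f (fst p) \<partial>kendall_walk_max \<alpha> \<nu> n)"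

lemma measurable_max_le_integrand:
  assumes [measurable]: "f \<in> borel_measurable borel"
  shows "(\<lambda>p. indicator {..t} (snd p) * f (fst p) :: real) \<in> borel_measurable (borel :: (real \<times> real) measure)"
  unfolding borel_prod[symmetric] by measurable

lemma max_le_expectation_0:
  "0 \<le> t \<Longrightarrow> f \<in> borel_measurable borel \<Longrightarrow> max_le_expectation t 0 f = f 0"
  unfolding max_le_expectation_def kendall_walk_max.simps
  by (subst integral_return) (auto intro: measurable_max_le_integrand)

lemma max_le_expectation_Suc:
  fixes f :: "real \<Rightarrow> real"
  assumes f: "f \<in> borel_measurable borel" and f_nonneg: "\<And>y. 0 \<le> f y" and f_le: "\<And>y. f y \<le> c"
  shows "max_le_expectation t (Suc n) f
       = max_le_expectation t n (\<lambda>x. \<integral>y. indicator {..t} y * f y \<partial>kendall_kernel \<alpha> \<nu> x)"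
proof -
  have step: "(\<lambda>(x, m). distr (kendall_kernel \<alpha> \<nu> x) borel (\<lambda>y. (y, max m y)))
      \<in> measurable (kendall_walk_max \<alpha> \<nu> n) (subprob_algebra borel)"
    by (subst measurable_cong_sets[OF sets_kendall_walk_max refl]) (rule measurable_kendall_walk_step)
  have max_le: "indicator {..t} (max m y) = (indicator {..t} m * indicator {..t} y :: real)" for m y :: real
    by (auto split: split_indicator)
  have "max_le_expectation t (Suc n) f
      = (\<integral>w. (\<integral>p. indicator {..t} (snd p) * f (fst p)
                  \<partial>(case w of (x, m) \<Rightarrow> distr (kendall_kernel \<alpha> \<nu> x) borel (\<lambda>y. (y, max m y))))
           \<partial>kendall_walk_max \<alpha> \<nu> n)"
    unfolding max_le_expectation_def kendall_walk_max.simps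
    using prob_space.not_empty[OF conjunct1[OF prob_space_kendall_walk_max]] f f_nonneg f_le
    by (intro integral_bind_nonneg_bounded[OF step _ measurable_max_le_integrand, where c=c])
       (auto simp: mult_le_one order_trans[OF _ f_le] split: split_indicator)
  also have "\<dots> = max_le_expectation t n (\<lambda>x. \<integral>y. indicator {..t} y * f y \<partial>kendall_kernel \<alpha> \<nu> x)"
    unfolding max_le_expectation_def using f
    by (intro Bochner_Integration.integral_cong refl)
       (auto simp: split_beta' integral_distr measurable_max_le_integrand max_le mult.assoc)
  finally show ?thesis .
qed

lemma max_le_expectation_linear:
  fixes f g :: "real \<Rightarrow> real"
  assumes "f \<in> borel_measurable borel" "\<And>x. \<bar>f x\<bar> \<le> 1"
    and "g \<in> borel_measurable borel" "\<And>x. \<bar>g x\<bar> \<le> 1"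
  shows "max_le_expectation t n (\<lambda>x. a + b * f x + c * g x)
       = a * max_le_expectation t n (\<lambda>_. 1) + b * max_le_expectation t n f + c * max_le_expectation t n g"
proof -
  interpret walk: prob_space "kendall_walk_max \<alpha> \<nu> n"
    using prob_space_kendall_walk_max by blast
  have "integrable (kendall_walk_max \<alpha> \<nu> n) (\<lambda>p. indicator {..t} (snd p) * h (fst p))"
    if "h \<in> borel_measurable borel" "\<And>x. \<bar>h x\<bar> \<le> 1" for h :: "real \<Rightarrow> real"
    using that
    by (intro walk.integrable_const_bound[where B=1])
       (auto simp: measurable_cong_sets[OF sets_kendall_walk_max refl] measurable_max_le_integrand
             split: split_indicator)
  from this[of f] this[of g] this[of "\<lambda>_. 1"] show ?thesis
    using assms by (simp add: max_le_expectation_def distrib_left mult.left_commute)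
qed

lemma max_le_expectation_cmult:
  "max_le_expectation t n (\<lambda>x. a * f x) = a * max_le_expectation t n f"
  by (simp add: max_le_expectation_def mult.left_commute)

lemma max_le_expectation_1:
  "max_le_expectation t n (\<lambda>_. 1) = measure (kendall_walk_max \<alpha> \<nu> n) {p. snd p \<le> t}"
proof -
  have "{p. snd p \<le> t} = snd -` {..t} \<inter> space (borel \<Otimes>\<^sub>M (borel :: real measure))"
    by (auto simp: space_pair_measure)
  also have "\<dots> \<in> sets (borel \<Otimes>\<^sub>M borel)"
    by (rule measurable_sets[OF measurable_snd]) simp
  finally have "{p. snd p \<le> t} \<in> sets (kendall_walk_max \<alpha> \<nu> n)"
    unfolding sets_kendall_walk_max borel_prod[symmetric] .
  moreover have indicator_max: "(\<lambda>p. indicator {..t} (snd p) * 1 :: real) = indicator {p. snd p \<le> t}"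
    by (auto split: split_indicator)
  ultimately show ?thesis
    unfolding max_le_expectation_def indicator_max by simp
qed

lemma max_le_expectation_Psi:
  assumes "t > 0"
  shows "max_le_expectation t n (\<lambda>x. Psi \<alpha> (x / t)) = funG \<alpha> \<nu> t ^ n"
proof (induction n)
  case 0
  show ?case using assms alpha_pos by (simp add: max_le_expectation_0 Psi_def)
next
  case (Suc n)
  have vanishes_above: "indicator {..t} y * Psi \<alpha> (y / t) = Psi \<alpha> (y / t)" for y
    using assms alpha_pos by (auto simp: Psi_eq_indicator split: split_indicator)
  have "max_le_expectation t (Suc n) (\<lambda>x. Psi \<alpha> (x / t))
      = max_le_expectation t n (\<lambda>x. funG \<alpha> \<nu> t * Psi \<alpha> (x / t))"
    using assms
    by (subst max_le_expectation_Suc[where c=1])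
       (auto simp: Psi_nonneg Psi_le_1 vanishes_above integral_Psi_kendall_kernel)
  then show ?case
    using Suc.IH by (simp add: max_le_expectation_cmult)
qed

lemma max_le_expectation_Icc:
  assumes "t > 0"
  shows "max_le_expectation t n (indicator {-t..t})
       = funG \<alpha> \<nu> t ^ n + real n * (measure \<nu> {-t..t} - funG \<alpha> \<nu> t) * funG \<alpha> \<nu> t ^ (n - 1)"
proof (induction n)
  case 0
  show ?case using assms by (simp add: max_le_expectation_0)
next
  case (Suc n)
  define G h where "G = funG \<alpha> \<nu> t" and "h = measure \<nu> {-t..t} - funG \<alpha> \<nu> t"
  have IH: "max_le_expectation t n (indicator {-t..t}) = G ^ n + real n * h * G ^ (n - 1)"
    using Suc.IH by (simp add: G_def h_def)
  have Psi: "max_le_expectation t n (\<lambda>x. Psi \<alpha> (x / t)) = G ^ n"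
    using assms by (simp add: max_le_expectation_Psi G_def)
  have Icc_below: "indicator {..t} y * indicator {-t..t} y = (indicator {-t..t} y :: real)" for y
    by (auto split: split_indicator)
  have "max_le_expectation t (Suc n) (indicator {-t..t})
      = max_le_expectation t n (\<lambda>x. measure (kendall_kernel \<alpha> \<nu> x) {-t..t})"
    by (subst max_le_expectation_Suc[where c=1]) (auto simp: Icc_below split: split_indicator)
  also have "\<dots> = max_le_expectation t n (\<lambda>x. 0 + G * indicator {-t..t} x + h * Psi \<alpha> (x / t))"
    using assms by (simp add: measure_kendall_kernel_Icc G_def h_def)
  also have "\<dots> = G * max_le_expectation t n (indicator {-t..t}) + h * max_le_expectation t n (\<lambda>x. Psi \<alpha> (x / t))"
    by (subst max_le_expectation_linear) (auto simp: Psi_nonneg Psi_le_1 split: split_indicator)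
  also have "\<dots> = G ^ Suc n + real (Suc n) * h * G ^ n"
    unfolding IH Psi by (cases n) (simp_all add: algebra_simps)
  finally show ?case by (simp add: G_def h_def)
qed

lemma max_le_expectation_1_Suc:
  assumes "t > 0"
  shows "max_le_expectation t (Suc n) (\<lambda>_. 1)
       = (max_le_expectation t n (\<lambda>_. 1) + funG \<alpha> \<nu> t * max_le_expectation t n (indicator {-t..t})
          + (measure \<nu> {-t..t} - funG \<alpha> \<nu> t) * max_le_expectation t n (\<lambda>x. Psi \<alpha> (x / t))) / 2"
proof -
  define G h where "G = funG \<alpha> \<nu> t" and "h = measure \<nu> {-t..t} - funG \<alpha> \<nu> t"
  have "max_le_expectation t (Suc n) (\<lambda>_. 1)
      = max_le_expectation t n (\<lambda>x. measure (kendall_kernel \<alpha> \<nu> x) {..t})"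
    by (subst max_le_expectation_Suc[where c=1]) auto
  also have "\<dots> = max_le_expectation t n (\<lambda>x. 1/2 + G/2 * indicator {-t..t} x + h/2 * Psi \<alpha> (x / t))"
    using assms
    by (simp add: measure_kendall_kernel_atMost measure_kendall_kernel_Icc G_def h_def
                  add_divide_distrib add.assoc)
  also have "\<dots> = (max_le_expectation t n (\<lambda>_. 1) + G * max_le_expectation t n (indicator {-t..t})
                    + h * max_le_expectation t n (\<lambda>x. Psi \<alpha> (x / t))) / 2"
    by (subst max_le_expectation_linear) (auto simp: Psi_nonneg Psi_le_1 split: split_indicator)
  finally show ?thesis by (simp add: G_def h_def)
qed

end

definition max_cdf_closed_form :: "real \<Rightarrow> real \<Rightarrow> nat \<Rightarrow> real" where
  "max_cdf_closed_form G H n =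
     (1 + H / (2*G - 1)^2 - G / (2*G - 1)) * (1/2)^n
     + (H * real n / (2*G - 1) + (G * (2*G - 1) - H) / (2*G - 1)^2) * G^n"

lemma max_cdf_closed_form_0: "max_cdf_closed_form G H 0 = 1"
  \<comment> \<open>also for \<open>2*G = 1\<close>, where every quotient is \<open>0\<close>\<close>
proof (cases "2*G - 1 = 0")
  case False
  define D where "D = 2*G - 1"
  have "D \<noteq> 0" using False by (simp add: D_def)
  have G: "G = (D + 1) / 2" by (simp add: D_def)
  show ?thesis
    unfolding max_cdf_closed_form_def D_def[symmetric]
    using \<open>D \<noteq> 0\<close> by (simp only: G) (simp add: field_simps power2_eq_square)
qed (simp add: max_cdf_closed_form_def)

lemma max_cdf_closed_form_Suc:
  assumes "2*G \<noteq> 1"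
  shows "max_cdf_closed_form G H (Suc n) = (max_cdf_closed_form G H n + G^Suc n + real (Suc n) * H * G^n) / 2"
proof -
  define D X where "D = 2*G - 1" and "X = G^n"
  have "D \<noteq> 0" using assms by (simp add: D_def)
  have G: "G = (D + 1) / 2" by (simp add: D_def)
  show ?thesis
    unfolding max_cdf_closed_form_def D_def[symmetric] power_Suc X_def[symmetric]
    using \<open>D \<noteq> 0\<close> by (simp only: G) (simp add: field_simps power2_eq_square)
qed

lemma max_cdf_closed_form_eq:
  assumes "2*G \<noteq> 1" and "G \<noteq> 1" and "n \<ge> 1"
  shows "max_cdf_closed_form G H n =
           (1 + H / (2*G - 1)^2 - G / (2*G - 1)) * (1/2)^n
           + H / ((2*G - 1) * (1 - G)) * (G / (1 - G)) * (1 - G)^2 * real n * G^(n-1)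
           + (H / ((2*G - 1) * (1 - G)) + (G / (2*G - 1) - H / (2*G - 1)^2 * (G / (1 - G))))
             * (G / (1 - G)) * G^(n-1) * (1 - G)"
proof -
  obtain k where n: "n = Suc k" using assms(3) by (cases n) auto
  define D E where "D = 2*G - 1" and "E = 1 - G"
  have "D \<noteq> 0" "E \<noteq> 0" using assms by (auto simp: D_def E_def)
  have linear: "H / (D * E) * (G / E) * E^2 = H / D * G"
    using \<open>D \<noteq> 0\<close> \<open>E \<noteq> 0\<close> by (simp add: field_simps power2_eq_square)
  have geometric: "(H / (D * E) + (G / D - H / D^2 * (G / E))) * (G / E) * X * E = (G * D - H) / D^2 * G * X" for X
    using \<open>D \<noteq> 0\<close> \<open>E \<noteq> 0\<close>
    by (simp add: field_simps power2_eq_square) (simp add: D_def E_def algebra_simps)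
  show ?thesis
    unfolding max_cdf_closed_form_def D_def[symmetric] E_def[symmetric] n diff_Suc_1 linear geometric
    by (simp add: algebra_simps)
qed

context kendall_random_walk
begin

lemma measure_kendall_walk_max_le:
  assumes "t > 0" and "2 * funG \<alpha> \<nu> t \<noteq> 1"
  shows "measure (kendall_walk_max \<alpha> \<nu> n) {p. snd p \<le> t}
       = max_cdf_closed_form (funG \<alpha> \<nu> t) (measure \<nu> {-t..t} - funG \<alpha> \<nu> t) n"
proof -
  define G h where "G = funG \<alpha> \<nu> t" and "h = measure \<nu> {-t..t} - funG \<alpha> \<nu> t"
  have "max_le_expectation t n (\<lambda>_. 1) = max_cdf_closed_form G h n"
  proof (induction n)
    case 0
    show ?case using assms by (simp add: max_le_expectation_0 max_cdf_closed_form_0)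
  next
    case (Suc n)
    have Icc: "max_le_expectation t n (indicator {-t..t}) = G^n + real n * h * G^(n - 1)"
      using assms by (simp add: max_le_expectation_Icc G_def h_def)
    have Psi: "max_le_expectation t n (\<lambda>x. Psi \<alpha> (x / t)) = G^n"
      using assms by (simp add: max_le_expectation_Psi G_def)
    have "max_le_expectation t (Suc n) (\<lambda>_. 1)
        = (max_le_expectation t n (\<lambda>_. 1) + G * max_le_expectation t n (indicator {-t..t})
           + h * max_le_expectation t n (\<lambda>x. Psi \<alpha> (x / t))) / 2"
      using max_le_expectation_1_Suc[OF assms(1)] by (simp add: G_def h_def)
    also have "\<dots> = (max_le_expectation t n (\<lambda>_. 1) + G^Suc n + real (Suc n) * h * G^n) / 2"
    proof -
      have "G * (real n * h * G^(n - 1)) = real n * h * G^n" by (cases n) simp_all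
      then show ?thesis unfolding Icc Psi by (simp add: algebra_simps)
    qed
    finally show ?case
      using assms Suc.IH by (simp add: max_cdf_closed_form_Suc G_def)
  qed
  then show ?thesis by (simp add: max_le_expectation_1 G_def h_def)
qed

end

lemma funH_eq_measure_Icc:
  assumes "prob_space \<nu>" and "sets \<nu> = sets borel" and "distr \<nu> borel uminus = \<nu>" and "0 \<le> t"
  shows "funH \<alpha> \<nu> t = measure \<nu> {-t..t} - funG \<alpha> \<nu> t"
  using measure_atMost_symmetric[OF assms] by (simp add: funH_def cdfF_def)

theorem lemma14:
  fixes \<alpha> t :: real and \<nu> :: "real measure" and n :: nat
  assumes "\<alpha> > 0"
    and "prob_space \<nu>" and "sets \<nu> = sets borel"
    and "distr \<nu> borel uminus = \<nu>"
    and "measure \<nu> {0} = 0"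
    and "t > 0" and "measure \<nu> {t} = 0"
    and "funG \<alpha> \<nu> t \<noteq> 1/2"
    and "n \<ge> 1"
  shows "let G = funG \<alpha> \<nu> t; H = funH \<alpha> \<nu> t;
             A = 1 + H / (2*G - 1)^2 - G / (2*G - 1);
             B = H / ((2*G - 1) * (1 - G));
             C = G / (2*G - 1) - H / (2*G - 1)^2 * (G / (1 - G))
         in measure (kendall_walk_max \<alpha> \<nu> n) {p. snd p \<le> t}
            = A * (1/2)^n + B * (G / (1 - G)) * (1 - G)^2 * real n * G^(n-1)
              + (B + C) * (G / (1 - G)) * G^(n-1) * (1 - G)"
proof -
  interpret kendall_random_walk \<alpha> \<nu>
    using assms(1-3) by (rule kendall_random_walk.intro)
  define G where "G = funG \<alpha> \<nu> t"
  have "G < 1" using funG_less_1[OF assms(6,5)] by (simp add: G_def)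
  have "2 * G \<noteq> 1" using assms(8) by (simp add: G_def)
  have "funH \<alpha> \<nu> t = measure \<nu> {-t..t} - G"
    using funH_eq_measure_Icc assms(2-4,6) by (simp add: G_def)
  then have "measure (kendall_walk_max \<alpha> \<nu> n) {p. snd p \<le> t} = max_cdf_closed_form G (funH \<alpha> \<nu> t) n"
    using measure_kendall_walk_max_le[OF assms(6)] \<open>2 * G \<noteq> 1\<close> by (simp add: G_def)
  then show ?thesis
    using max_cdf_closed_form_eq[OF \<open>2 * G \<noteq> 1\<close> _ assms(9)] \<open>G < 1\<close> by (simp add: Let_def G_def)
qed

end
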